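(* Consider the two-route traffic model described in the context, under assumptions (A1)–(A6). Then the system is monotone: if $x_0,y_0\in\Omega$ satisfy $x_0\le y_0$ componentwise, then the corresponding solutions satisfy $x(t;x_0)\le x(t;y_0)$ componentwise for all $t\ge0$.
   Context: Two routes $i=1,2$ connect an origin to a destination. For each route there are positive parameters $B_i$, $C_i$, $F_i$ with $C_i<B_i$; the demand is a constant $\phi>0$. Set $v_i=F_i/C_i$ and $E_i=v_iB_i$. The state $x=(x_1,x_2)\in\Omega:=[0,B_1]\times[0,B_2]$ evolves by $\dot x_i=\min\{\phi R_i(x),S_i(x_i)\}-D_i(x_i)$, $i=1,2$, with $S_i(x_i)=F_i$ if $x_i<C_i$, $S_i(x_i)=\frac{F_i}{B_i-C_i}(B_i-x_i)$ otherwise; $D_i(x_i)=v_ix_i$ if $x_i<C_i$, $D_i(x_i)=F_i$ otherwise. Routing ratios: $R_i(x)=(1-\alpha)r_i^0+\alpha\, r_i(\tau(x))$, with $\alpha\in(0,1]$, $r_1^0,r_2^0\ge0$, $r_1^0+r_2^0=1$, $\tau(x)=(\tau_1(x_1),\tau_2(x_2))$, each $\tau_i$ $C^1$ and strictly increasing, $0\le r_i(\tau(x))\le1$, $r_1(\tau(x))+r_2(\tau(x))=1$ on $\Omega$, $x\mapsto r_i(\tau(x))$ globally Lipschitz and $C^1$ on $\Omega$. Assumptions: (A1) $\phi<F_1+F_2$; (A2)–(A3) as just listed; (A4) $\partial R_i/\partial\tau_j>0$ for $i\ne j$; (A5) $F_i>(1-\alpha)\phi r_i^0$; (A6) $\phi<E_i$,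 $i=1,2$. *)

theory Defs
  imports "HOL-Analysis.Analysis"
begin

definition supply_fn :: "real \<Rightarrow> real \<Rightarrow> real \<Rightarrow> real \<Rightarrow> real" where
  "supply_fn B C F x = (if x < C then F else F / (B - C) * (B - x))"

text \<open>Demand function D_i of a route, with v = F / C.\<close>
definition demand_fn :: "real \<Rightarrow> real \<Rightarrow> real \<Rightarrow> real" where
  "demand_fn C F x = (if x < C then (F / C) * x else F)"

definition Omega :: "real \<Rightarrow> real \<Rightarrow> (real \<times> real) set" where
  "Omega B1 B2 = {0..B1} \<times> {0..B2}"

definition routing ::
  "real \<Rightarrow> real \<Rightarrow> (real \<Rightarrow> real \<Rightarrow> real) \<Rightarrow> (real \<Rightarrow> real) \<Rightarrow> (real \<Rightarrow> real)
     \<Rightarrow> real \<times> real \<Rightarrow> real" where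
  "routing \<alpha> r0 r \<tau>1 \<tau>2 x = (1 - \<alpha>) * r0 + \<alpha> * r (\<tau>1 (fst x)) (\<tau>2 (snd x))"

definition traffic_field ::
  "real \<Rightarrow> real \<Rightarrow> real \<Rightarrow> real \<Rightarrow> real \<Rightarrow> real \<Rightarrow> real \<Rightarrow> real \<Rightarrow> real \<Rightarrow> real
   \<Rightarrow> (real \<Rightarrow> real \<Rightarrow> real) \<Rightarrow> (real \<Rightarrow> real \<Rightarrow> real) \<Rightarrow> (real \<Rightarrow> real) \<Rightarrow> (real \<Rightarrow> real)
   \<Rightarrow> real \<times> real \<Rightarrow> real \<times> real" where
  "traffic_field B1 C1 F1 B2 C2 F2 \<phi> \<alpha> r01 r02 r1 r2 \<tau>1 \<tau>2 x =
     (min (\<phi> * routing \<alpha> r01 r1 \<tau>1 \<tau>2 x) (supply_fn B1 C1 F1 (fst x)) - demand_fn C1 F1 (fst x),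
      min (\<phi> * routing \<alpha> r02 r2 \<tau>1 \<tau>2 x) (supply_fn B2 C2 F2 (snd x)) - demand_fn C2 F2 (snd x))"

definition C1_on :: "('a::real_normed_vector) set \<Rightarrow> ('a \<Rightarrow> 'b::real_normed_vector) \<Rightarrow> bool" where
  "C1_on S g \<longleftrightarrow> (\<exists>g'. (\<forall>x\<in>S. (g has_derivative blinfun_apply (g' x)) (at x within S))
                        \<and> continuous_on S g')"

definition is_solution ::
  "(real \<times> real \<Rightarrow> real \<times> real) \<Rightarrow> (real \<times> real) set \<Rightarrow> real \<times> real \<Rightarrow> (real \<Rightarrow> real \<times> real) \<Rightarrow> bool" where
  "is_solution f S x0 x \<longleftrightarrow> x 0 = x0 \<and>
     (\<forall>t\<ge>0. x t \<in> S \<and> (x has_vector_derivative f (x t)) (at t within {0..}))"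

end

theory Submission
  imports Defs
begin

text \<open>The vector field is quasi-monotone (cooperative): raising the density on one route
  can only raise the routing ratio, hence the inflow, of the other route (A4), while a route's
  own supply is nonincreasing and its demand nondecreasing in its own density. With the
  Lipschitz bound on the routing this gives the Kamke condition
  \<open>f\<^sub>i(p) - f\<^sub>i(q) \<le> K (|p\<^sub>1 - q\<^sub>1|\<^sub>+ + |p\<^sub>2 - q\<^sub>2|\<^sub>+)\<close> whenever \<open>p\<^sub>i \<ge> q\<^sub>i\<close>.
  Then both components of \<open>x - y\<close> stay below every barrier \<open>e exp ((2K + 1) t)\<close>: at the first
  time a component touched the barrier its derivative would have to reach the barrier's slope
  \<open>(2K + 1) e exp ((2K + 1) t)\<close>, while the Kamke condition bounds it by \<open>2K e exp ((2K + 1) t)\<close>.\<close>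

lemma DERIV_nonneg_at_first_zero:
  fixes h :: "real \<Rightarrow> real"
  assumes "(h has_real_derivative D) (at t)" "h t = 0" "t0 < t"
    and "\<And>s. t0 \<le> s \<Longrightarrow> s < t \<Longrightarrow> h s < 0"
  shows "D \<ge> 0"
proof (rule ccontr)
  assume "\<not> D \<ge> 0"
  then obtain d where "d > 0" and d: "\<And>k. k > 0 \<Longrightarrow> k < d \<Longrightarrow> h t < h (t - k)"
    using DERIV_neg_dec_left[OF assms(1)] by force
  define k where "k = min (d / 2) (t - t0)"
  have "k > 0" "k < d" "t0 \<le> t - k" using \<open>d > 0\<close> assms(3) by (auto simp: k_def)
  with d[of k] assms(4)[of "t - k"] show False by (simp add: assms(2))
qed

lemma first_zero:
  fixes g :: "real \<Rightarrow> real"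
  assumes cont: "continuous_on {a..b} g" and "g a < 0" "0 \<le> g b" "a \<le> b"
  obtains t where "a < t" "t \<le> b" "g t = 0" "\<And>s. a \<le> s \<Longrightarrow> s < t \<Longrightarrow> g s < 0"
proof -
  define Z where "Z = {s \<in> {a..b}. g s = 0}"
  have zero_in_Z: "\<exists>z\<in>Z. z \<le> c" if c: "a \<le> c" "c \<le> b" "0 \<le> g c" for c
  proof -
    have "continuous_on {a..c} g" using cont c by (auto intro: continuous_on_subset)
    then obtain z where "a \<le> z" "z \<le> c" "g z = 0"
      using IVT'[of g a 0 c] \<open>g a < 0\<close> c by auto
    then show ?thesis using c by (auto simp: Z_def)
  qed
  have "closed Z"
    unfolding Z_def by (rule continuous_closed_preimage_constant[OF cont]) simp
  moreover have "Z \<noteq> {}" using zero_in_Z[of b] assms by auto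
  moreover have bdd: "bdd_below Z" by (auto simp: Z_def bdd_below_def)
  ultimately have "Inf Z \<in> Z" by (intro closed_contains_Inf)
  moreover have "g s < 0" if "a \<le> s" "s < Inf Z" for s
  proof (rule ccontr)
    assume "\<not> g s < 0"
    then obtain z where "z \<in> Z" "z \<le> s"
      using zero_in_Z[of s] \<open>a \<le> s\<close> \<open>s < Inf Z\<close> \<open>Inf Z \<in> Z\<close> by (auto simp: Z_def)
    then show False using cInf_lower[OF _ bdd, of z] that by simp
  qed
  moreover have "a \<noteq> Inf Z" using \<open>Inf Z \<in> Z\<close> \<open>g a < 0\<close> by (auto simp: Z_def)
  ultimately show ?thesis
    by (intro that[of "Inf Z"]) (auto simp: Z_def)
qed

lemma mono_on_comp_of_pos_deriv:
  fixes g \<tau> :: "real \<Rightarrow> real"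
  assumes cont: "continuous_on {c..d} \<tau>" and mono: "mono_on {c..d} \<tau>"
    and deriv: "\<And>v. v \<in> {c..d} \<Longrightarrow> \<exists>D>0. (g has_real_derivative D) (at (\<tau> v))"
  shows "mono_on {c..d} (\<lambda>v. g (\<tau> v))"
proof (rule mono_onI)
  fix s s' assume s: "s \<in> {c..d}" "s' \<in> {c..d}" "s \<le> s'"
  show "g (\<tau> s) \<le> g (\<tau> s')"
  proof (rule DERIV_nonneg_imp_nondecreasing[of "\<tau> s" "\<tau> s'" g])
    show "\<tau> s \<le> \<tau> s'" using mono_onD[OF mono s] .
    fix w assume "\<tau> s \<le> w" "w \<le> \<tau> s'"
    moreover have "continuous_on {s..s'} \<tau>" using cont s by (auto intro: continuous_on_subset)
    ultimately obtain v where "s \<le> v" "v \<le> s'" "\<tau> v = w"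
      using IVT'[of \<tau> s w s'] \<open>s \<le> s'\<close> by blast
    then show "\<exists>D. (g has_real_derivative D) (at w) \<and> 0 \<le> D"
      using deriv[of v] s by (auto intro: less_imp_le)
  qed
qed

lemma lipschitz_on_swap:
  "lipschitz_on L (A \<times> B) g \<Longrightarrow> lipschitz_on L (B \<times> A) (\<lambda>z. g (prod.swap z))"
  by (force simp: lipschitz_on_def dist_Pair_Pair add.commute)

lemma has_real_derivative_fst:
  "(x has_vector_derivative v) F \<Longrightarrow> ((\<lambda>t. fst (x t)) has_real_derivative fst v) F"
  using bounded_linear.has_vector_derivative[OF bounded_linear_fst]
  by (simp add: has_real_derivative_iff_has_vector_derivative)

lemma has_real_derivative_snd:
  "(x has_vector_derivative v) F \<Longrightarrow> ((\<lambda>t. snd (x t)) has_real_derivative snd v) F"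
  using bounded_linear.has_vector_derivative[OF bounded_linear_snd]
  by (simp add: has_real_derivative_iff_has_vector_derivative)

context
  fixes u v u' v' :: "real \<Rightarrow> real" and K :: real
  assumes K_nonneg: "0 \<le> K"
    and u_deriv: "\<And>t. 0 < t \<Longrightarrow> (u has_real_derivative u' t) (at t)"
    and v_deriv: "\<And>t. 0 < t \<Longrightarrow> (v has_real_derivative v' t) (at t)"
    and u_cont: "continuous_on {0..} u"
    and v_cont: "continuous_on {0..} v"
    and u_init: "u 0 \<le> 0"
    and v_init: "v 0 \<le> 0"
    and u_growth: "\<And>t. 0 < t \<Longrightarrow> 0 \<le> u t \<Longrightarrow> u' t \<le> K * (max 0 (u t) + max 0 (v t))"
    and v_growth: "\<And>t. 0 < t \<Longrightarrow> 0 \<le> v t \<Longrightarrow> v' t \<le> K * (max 0 (u t) + max 0 (v t))"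
begin

lemma below_exp_barrier:
  assumes "0 < e" "0 \<le> t"
  shows "u t < e * exp ((2 * K + 1) * t) \<and> v t < e * exp ((2 * K + 1) * t)"
proof (rule ccontr)
  define b where "b s = e * exp ((2 * K + 1) * s)" for s
  define g where "g s = max (u s - b s) (v s - b s)" for s
  assume "\<not> ?thesis"
  then have "0 \<le> g t" by (auto simp: g_def b_def)
  moreover have "g 0 < 0" using u_init v_init \<open>0 < e\<close> by (simp add: g_def b_def)
  moreover have "continuous_on {0..t} g"
    unfolding g_def b_def using u_cont v_cont
    by (auto intro!: continuous_intros intro: continuous_on_subset)
  ultimately obtain t1 where "0 < t1" "g t1 = 0"
    and before: "\<And>s. 0 \<le> s \<Longrightarrow> s < t1 \<Longrightarrow> g s < 0"
    using first_zero[of 0 t g] \<open>0 \<le> t\<close> by metis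
  have b_deriv: "(b has_real_derivative (2 * K + 1) * b t1) (at t1)"
    unfolding b_def by (auto intro!: derivative_eq_intros)
  have "0 < b t1" using \<open>0 < e\<close> by (simp add: b_def)
  have "K * (max 0 (u t1) + max 0 (v t1)) \<le> K * (2 * b t1)"
    using \<open>g t1 = 0\<close> \<open>0 < b t1\<close> K_nonneg by (intro mult_left_mono) (auto simp: g_def)
  then have growth_lt: "K * (max 0 (u t1) + max 0 (v t1)) < (2 * K + 1) * b t1"
    using \<open>0 < b t1\<close> by (simp add: algebra_simps)
  have no_touch: False
    if "(w has_real_derivative w') (at t1)" "w t1 = b t1"
       "\<And>s. 0 \<le> s \<Longrightarrow> s < t1 \<Longrightarrow> w s < b s" "w' \<le> K * (max 0 (u t1) + max 0 (v t1))" for w w'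
  proof -
    have "0 \<le> w' - (2 * K + 1) * b t1"
      using DERIV_nonneg_at_first_zero[OF DERIV_diff[OF that(1) b_deriv], of 0] that(2,3) \<open>0 < t1\<close>
      by simp
    then show False using growth_lt that(4) by linarith
  qed
  from \<open>g t1 = 0\<close> consider "u t1 = b t1" | "v t1 = b t1"
    by (auto simp: g_def max_def split: if_splits)
  then show False
  proof cases
    case 1
    with before \<open>0 < b t1\<close> show False
      by (intro no_touch[OF u_deriv[OF \<open>0 < t1\<close>]] u_growth[OF \<open>0 < t1\<close>]) (force simp: g_def)+
  next
    case 2
    with before \<open>0 < b t1\<close> show False
      by (intro no_touch[OF v_deriv[OF \<open>0 < t1\<close>]] v_growth[OF \<open>0 < t1\<close>]) (force simp: g_def)+
  qed
qed

lemma quasimonotone_comparison: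
  assumes "0 \<le> t"
  shows "u t \<le> 0 \<and> v t \<le> 0"
proof -
  have "u t \<le> 0 + e \<and> v t \<le> 0 + e" if "0 < e" for e
    using below_exp_barrier[of "e / exp ((2 * K + 1) * t)" t] that assms by simp
  then show ?thesis by (meson field_le_epsilon)
qed

end

lemma is_solution_has_vector_derivative:
  assumes "is_solution f S x0 x" "0 < t"
  shows "(x has_vector_derivative f (x t)) (at t)"
proof -
  have "at t within {0..} = at t" using \<open>0 < t\<close> by (intro at_within_interior) simp
  then show ?thesis using assms unfolding is_solution_def by (metis less_imp_le)
qed

lemma is_solution_continuous_on:
  assumes "is_solution f S x0 x"
  shows "continuous_on {0..} x"
  unfolding continuous_on_eq_continuous_within
  using assms by (auto simp: is_solution_def intro: has_vector_derivative_continuous)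

lemma is_solution_ordered:
  fixes f :: "real \<times> real \<Rightarrow> real \<times> real"
  assumes solx: "is_solution f S x0 x" and soly: "is_solution f S y0 y"
    and init: "fst x0 \<le> fst y0" "snd x0 \<le> snd y0"
    and "0 \<le> K"
    and fst_qm: "\<And>p q. p \<in> S \<Longrightarrow> q \<in> S \<Longrightarrow> fst q \<le> fst p \<Longrightarrow>
                   fst (f p) - fst (f q) \<le> K * (max 0 (fst p - fst q) + max 0 (snd p - snd q))"
    and snd_qm: "\<And>p q. p \<in> S \<Longrightarrow> q \<in> S \<Longrightarrow> snd q \<le> snd p \<Longrightarrow>
                   snd (f p) - snd (f q) \<le> K * (max 0 (fst p - fst q) + max 0 (snd p - snd q))"
    and "0 \<le> t"
  shows "fst (x t) \<le> fst (y t) \<and> snd (x t) \<le> snd (y t)"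
proof -
  have in_S: "x s \<in> S" "y s \<in> S" if "0 < s" for s
    using solx soly that by (auto simp: is_solution_def)
  note dx = is_solution_has_vector_derivative[OF solx] and dy = is_solution_has_vector_derivative[OF soly]
  note cx = is_solution_continuous_on[OF solx] and cy = is_solution_continuous_on[OF soly]
  have "fst (x t) - fst (y t) \<le> 0 \<and> snd (x t) - snd (y t) \<le> 0"
  proof (rule quasimonotone_comparison[where u = "\<lambda>s. fst (x s) - fst (y s)"
                                        and v = "\<lambda>s. snd (x s) - snd (y s)"
                                        and u' = "\<lambda>s. fst (f (x s)) - fst (f (y s))"
                                        and v' = "\<lambda>s. snd (f (x s)) - snd (f (y s))"])
    show "((\<lambda>s. fst (x s) - fst (y s)) has_real_derivative fst (f (x s)) - fst (f (y s))) (at s)"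
      "((\<lambda>s. snd (x s) - snd (y s)) has_real_derivative snd (f (x s)) - snd (f (y s))) (at s)"
      if "0 < s" for s
      using dx[OF that] dy[OF that]
      by (auto intro!: DERIV_diff has_real_derivative_fst has_real_derivative_snd)
    show "continuous_on {0..} (\<lambda>s. fst (x s) - fst (y s))"
      "continuous_on {0..} (\<lambda>s. snd (x s) - snd (y s))"
      using cx cy by (auto intro!: continuous_intros)
    show "fst (f (x s)) - fst (f (y s))
            \<le> K * (max 0 (fst (x s) - fst (y s)) + max 0 (snd (x s) - snd (y s)))"
      if "0 < s" "0 \<le> fst (x s) - fst (y s)" for s
      using fst_qm[OF in_S[OF that(1)]] that(2) by simp
    show "snd (f (x s)) - snd (f (y s))
            \<le> K * (max 0 (fst (x s) - fst (y s)) + max 0 (snd (x s) - snd (y s)))"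
      if "0 < s" "0 \<le> snd (x s) - snd (y s)" for s
      using snd_qm[OF in_S[OF that(1)]] that(2) by simp
  qed (use init solx soly \<open>0 \<le> K\<close> \<open>0 \<le> t\<close> in \<open>auto simp: is_solution_def\<close>)
  then show ?thesis by simp
qed

lemma supply_fn_antimono:
  assumes "C < B" "0 \<le> F" "a \<le> b"
  shows "supply_fn B C F b \<le> supply_fn B C F a"
proof -
  have "F / (B - C) * (B - b) \<le> F / (B - C) * (B - a)"
    using assms by (intro mult_left_mono) auto
  moreover have "F / (B - C) * (B - b) \<le> F" if "C \<le> b"
    using assms that by (simp add: divide_simps mult_left_mono)
  ultimately show ?thesis using assms by (auto simp: supply_fn_def)
qed

lemma demand_fn_mono:
  assumes "0 < C" "0 \<le> F" "a \<le> b"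
  shows "demand_fn C F a \<le> demand_fn C F b"
proof -
  have "F / C * a \<le> F / C * b"
    using assms by (intro mult_left_mono) auto
  moreover have "F / C * a \<le> F" if "a < C"
    using assms that by (simp add: divide_simps mult_left_mono)
  ultimately show ?thesis using assms by (auto simp: demand_fn_def)
qed

text \<open>The state is written as (own density, other density); route 2 is handled by swapping
  the coordinates.\<close>
definition route_rate :: "(real \<times> real \<Rightarrow> real) \<Rightarrow> real \<Rightarrow> real \<Rightarrow> real \<Rightarrow> real \<times> real \<Rightarrow> real" where
  "route_rate R B C F z = min (R z) (supply_fn B C F (fst z)) - demand_fn C F (fst z)"

lemma route_rate_diff_le:
  assumes "C < B" "0 < C" "0 \<le> F"
    and lip: "lipschitz_on L (A \<times> A') R"
    and mono: "\<And>a b b'. a \<in> A \<Longrightarrow> b \<in> A' \<Longrightarrow> b' \<in> A' \<Longrightarrow> b \<le> b' \<Longrightarrow> R (a, b) \<le> R (a, b')"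
    and p: "p \<in> A \<times> A'" and q: "q \<in> A \<times> A'" and "fst q \<le> fst p"
  shows "route_rate R B C F p - route_rate R B C F q
           \<le> L * (max 0 (fst p - fst q) + max 0 (snd p - snd q))"
proof -
  obtain a b a' b' where pq: "p = (a, b)" "q = (a', b')" by fastforce
  define m where "m = max b b'"
  define X where "X = max 0 (a - a') + max 0 (b - b')"
  have "m \<in> A'" using p q by (simp add: pq m_def max_def)
  then have "(a, m) \<in> A \<times> A'" using p by (simp add: pq)
  have "R p \<le> R (a, m)"
    unfolding pq(1) using p \<open>m \<in> A'\<close> by (intro mono) (simp_all add: pq m_def)
  also have "\<dots> \<le> R q + L * dist (a, m) (a', b')"
    using lipschitz_onD[OF lip \<open>(a, m) \<in> A \<times> A'\<close> q] by (simp add: pq dist_real_def)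
  also have "\<dots> \<le> R q + L * X"
  proof -
    have "dist (a, m) (a', b') \<le> \<bar>a - a'\<bar> + \<bar>m - b'\<bar>"
      using sqrt_sum_squares_le_sum_abs[of "a - a'" "m - b'"] by (simp add: dist_Pair_Pair dist_real_def)
    also have "\<dots> = X" using \<open>fst q \<le> fst p\<close> by (simp add: X_def m_def pq)
    finally show ?thesis using lipschitz_on_nonneg[OF lip] by (simp add: mult_left_mono)
  qed
  finally have "R p \<le> R q + L * X" .
  moreover have "supply_fn B C F a \<le> supply_fn B C F a'" "demand_fn C F a' \<le> demand_fn C F a"
    using supply_fn_antimono demand_fn_mono assms \<open>fst q \<le> fst p\<close> by (simp_all add: pq)
  moreover have "0 \<le> L * X" using lipschitz_on_nonneg[OF lip] by (simp add: X_def)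
  ultimately show ?thesis
    unfolding route_rate_def X_def pq fst_conv snd_conv by linarith
qed

lemma routing_lipschitz:
  assumes "lipschitz_on L S (\<lambda>z. r (\<tau>1 (fst z)) (\<tau>2 (snd z)))" "0 \<le> \<phi>" "0 \<le> \<alpha>"
  shows "lipschitz_on (\<phi> * \<alpha> * L) S (\<lambda>z. \<phi> * routing \<alpha> r0 r \<tau>1 \<tau>2 z)"
proof -
  have "lipschitz_on (0 + \<alpha> * L) S (\<lambda>z. (1 - \<alpha>) * r0 + \<alpha> * r (\<tau>1 (fst z)) (\<tau>2 (snd z)))"
    using assms by (intro lipschitz_on_add lipschitz_on_constant lipschitz_on_cmult_real_nonneg)
  then have "lipschitz_on (\<phi> * (0 + \<alpha> * L)) S (\<lambda>z. \<phi> * routing \<alpha> r0 r \<tau>1 \<tau>2 z)"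
    unfolding routing_def using assms(2) by (rule lipschitz_on_cmult_real_nonneg)
  then show ?thesis by (simp add: mult.assoc)
qed

lemma routing_mono_snd:
  assumes "0 \<le> \<phi>" "continuous_on {c..d} \<tau>2" "mono_on {c..d} \<tau>2"
    and "\<And>v. v \<in> {c..d} \<Longrightarrow> \<exists>D>0. ((\<lambda>s. \<alpha> * r (\<tau>1 a) s) has_real_derivative D) (at (\<tau>2 v))"
    and "b \<in> {c..d}" "b' \<in> {c..d}" "b \<le> b'"
  shows "\<phi> * routing \<alpha> r0 r \<tau>1 \<tau>2 (a, b) \<le> \<phi> * routing \<alpha> r0 r \<tau>1 \<tau>2 (a, b')"
  using mono_onD[OF mono_on_comp_of_pos_deriv[OF assms(2-4)] assms(5-7)] assms(1)
  by (simp add: routing_def mult_left_mono)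

lemma routing_mono_fst:
  assumes "0 \<le> \<phi>" "continuous_on {c..d} \<tau>1" "mono_on {c..d} \<tau>1"
    and "\<And>v. v \<in> {c..d} \<Longrightarrow> \<exists>D>0. ((\<lambda>s. \<alpha> * r s (\<tau>2 a)) has_real_derivative D) (at (\<tau>1 v))"
    and "b \<in> {c..d}" "b' \<in> {c..d}" "b \<le> b'"
  shows "\<phi> * routing \<alpha> r0 r \<tau>1 \<tau>2 (b, a) \<le> \<phi> * routing \<alpha> r0 r \<tau>1 \<tau>2 (b', a)"
  using mono_onD[OF mono_on_comp_of_pos_deriv[OF assms(2-4)] assms(5-7)] assms(1)
  by (simp add: routing_def mult_left_mono)

lemma traffic_field_fst_quasimonotone:
  assumes "0 < C1" "C1 < B1" "0 \<le> F1" "0 \<le> \<phi>" "0 \<le> \<alpha>"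
    and \<tau>2: "continuous_on {0..B2} \<tau>2" "mono_on {0..B2} \<tau>2"
    and lip: "lipschitz_on L (Omega B1 B2) (\<lambda>z. r1 (\<tau>1 (fst z)) (\<tau>2 (snd z)))"
    and A4: "\<forall>z\<in>Omega B1 B2. \<exists>d>0.
               ((\<lambda>s. \<alpha> * r1 (\<tau>1 (fst z)) s) has_real_derivative d) (at (\<tau>2 (snd z)))"
    and "p \<in> Omega B1 B2" "q \<in> Omega B1 B2" "fst q \<le> fst p"
  shows "fst (traffic_field B1 C1 F1 B2 C2 F2 \<phi> \<alpha> r01 r02 r1 r2 \<tau>1 \<tau>2 p)
           - fst (traffic_field B1 C1 F1 B2 C2 F2 \<phi> \<alpha> r01 r02 r1 r2 \<tau>1 \<tau>2 q)
         \<le> \<phi> * \<alpha> * L * (max 0 (fst p - fst q) + max 0 (snd p - snd q))"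
proof -
  let ?R = "\<lambda>z. \<phi> * routing \<alpha> r01 r1 \<tau>1 \<tau>2 z"
  have "route_rate ?R B1 C1 F1 p - route_rate ?R B1 C1 F1 q
          \<le> \<phi> * \<alpha> * L * (max 0 (fst p - fst q) + max 0 (snd p - snd q))"
  proof (rule route_rate_diff_le[where A = "{0..B1}" and A' = "{0..B2}"])
    show "lipschitz_on (\<phi> * \<alpha> * L) ({0..B1} \<times> {0..B2}) ?R"
      using routing_lipschitz[where r = r1, OF lip] assms(4,5) by (simp add: Omega_def)
    show "?R (a, b) \<le> ?R (a, b')"
      if "a \<in> {0..B1}" "b \<in> {0..B2}" "b' \<in> {0..B2}" "b \<le> b'" for a b b'
      using that A4 by (intro routing_mono_snd[OF \<open>0 \<le> \<phi>\<close> \<tau>2]) (auto simp: Omega_def)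
  qed (use assms in \<open>simp_all add: Omega_def\<close>)
  then show ?thesis by (simp add: traffic_field_def route_rate_def)
qed

lemma traffic_field_snd_quasimonotone:
  assumes "0 < C2" "C2 < B2" "0 \<le> F2" "0 \<le> \<phi>" "0 \<le> \<alpha>"
    and \<tau>1: "continuous_on {0..B1} \<tau>1" "mono_on {0..B1} \<tau>1"
    and lip: "lipschitz_on L (Omega B1 B2) (\<lambda>z. r2 (\<tau>1 (fst z)) (\<tau>2 (snd z)))"
    and A4: "\<forall>z\<in>Omega B1 B2. \<exists>d>0.
               ((\<lambda>s. \<alpha> * r2 s (\<tau>2 (snd z))) has_real_derivative d) (at (\<tau>1 (fst z)))"
    and "p \<in> Omega B1 B2" "q \<in> Omega B1 B2" "snd q \<le> snd p"
  shows "snd (traffic_field B1 C1 F1 B2 C2 F2 \<phi> \<alpha> r01 r02 r1 r2 \<tau>1 \<tau>2 p)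
           - snd (traffic_field B1 C1 F1 B2 C2 F2 \<phi> \<alpha> r01 r02 r1 r2 \<tau>1 \<tau>2 q)
         \<le> \<phi> * \<alpha> * L * (max 0 (fst p - fst q) + max 0 (snd p - snd q))"
proof -
  let ?R = "\<lambda>z. \<phi> * routing \<alpha> r02 r2 \<tau>1 \<tau>2 (prod.swap z)"
  have "route_rate ?R B2 C2 F2 (prod.swap p) - route_rate ?R B2 C2 F2 (prod.swap q)
          \<le> \<phi> * \<alpha> * L * (max 0 (fst (prod.swap p) - fst (prod.swap q))
                            + max 0 (snd (prod.swap p) - snd (prod.swap q)))"
  proof (rule route_rate_diff_le[where A = "{0..B2}" and A' = "{0..B1}"])
    have "lipschitz_on (\<phi> * \<alpha> * L) ({0..B1} \<times> {0..B2}) (\<lambda>z. \<phi> * routing \<alpha> r02 r2 \<tau>1 \<tau>2 z)"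
      using routing_lipschitz[where r = r2, OF lip] assms(4,5) by (simp add: Omega_def)
    then show "lipschitz_on (\<phi> * \<alpha> * L) ({0..B2} \<times> {0..B1}) ?R"
      by (rule lipschitz_on_swap)
    show "?R (a, b) \<le> ?R (a, b')"
      if "a \<in> {0..B2}" "b \<in> {0..B1}" "b' \<in> {0..B1}" "b \<le> b'" for a b b'
      using that A4 by (simp, intro routing_mono_fst[OF \<open>0 \<le> \<phi>\<close> \<tau>1]) (auto simp: Omega_def)
  qed (use assms in \<open>auto simp: Omega_def\<close>)
  then show ?thesis by (simp add: traffic_field_def route_rate_def add.commute)
qed

theorem proposition1:
  fixes B1 C1 F1 B2 C2 F2 \<phi> \<alpha> r01 r02 :: real
    and r1 r2 :: "real \<Rightarrow> real \<Rightarrow> real"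
    and \<tau>1 \<tau>2 :: "real \<Rightarrow> real"
    and x0 y0 :: "real \<times> real"
    and x y :: "real \<Rightarrow> real \<times> real"
  assumes pos: "B1 > 0" "C1 > 0" "F1 > 0" "B2 > 0" "C2 > 0" "F2 > 0" "\<phi> > 0"
    and CB: "C1 < B1" "C2 < B2"
    and alpha: "0 < \<alpha>" "\<alpha> \<le> 1"
    and r0: "r01 \<ge> 0" "r02 \<ge> 0" "r01 + r02 = 1"
    and A1: "\<phi> < F1 + F2"
    and tau_C1: "\<tau>1 C1_differentiable_on {0..B1}" "\<tau>2 C1_differentiable_on {0..B2}"
    and tau_mono: "strict_mono_on {0..B1} \<tau>1" "strict_mono_on {0..B2} \<tau>2"
    and r_bounds: "\<forall>z\<in>Omega B1 B2. 0 \<le> r1 (\<tau>1 (fst z)) (\<tau>2 (snd z)) \<and> r1 (\<tau>1 (fst z)) (\<tau>2 (snd z)) \<le> 1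
                                  \<and> 0 \<le> r2 (\<tau>1 (fst z)) (\<tau>2 (snd z)) \<and> r2 (\<tau>1 (fst z)) (\<tau>2 (snd z)) \<le> 1
                                  \<and> r1 (\<tau>1 (fst z)) (\<tau>2 (snd z)) + r2 (\<tau>1 (fst z)) (\<tau>2 (snd z)) = 1"
    and r_lip: "\<exists>L. lipschitz_on L (Omega B1 B2) (\<lambda>z. r1 (\<tau>1 (fst z)) (\<tau>2 (snd z)))"
               "\<exists>L. lipschitz_on L (Omega B1 B2) (\<lambda>z. r2 (\<tau>1 (fst z)) (\<tau>2 (snd z)))"
    and r_C1: "C1_on (Omega B1 B2) (\<lambda>z. r1 (\<tau>1 (fst z)) (\<tau>2 (snd z)))"
              "C1_on (Omega B1 B2) (\<lambda>z. r2 (\<tau>1 (fst z)) (\<tau>2 (snd z)))"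
    and A4: "\<forall>z\<in>Omega B1 B2. \<exists>d>0.
               ((\<lambda>s. \<alpha> * r1 (\<tau>1 (fst z)) s) has_real_derivative d) (at (\<tau>2 (snd z)))"
            "\<forall>z\<in>Omega B1 B2. \<exists>d>0.
               ((\<lambda>s. \<alpha> * r2 s (\<tau>2 (snd z))) has_real_derivative d) (at (\<tau>1 (fst z)))"
    and A5: "F1 > (1 - \<alpha>) * \<phi> * r01" "F2 > (1 - \<alpha>) * \<phi> * r02"
    and A6: "\<phi> < (F1 / C1) * B1" "\<phi> < (F2 / C2) * B2"
    and init: "x0 \<in> Omega B1 B2" "y0 \<in> Omega B1 B2" "fst x0 \<le> fst y0" "snd x0 \<le> snd y0"
    and solx: "is_solution (traffic_field B1 C1 F1 B2 C2 F2 \<phi> \<alpha> r01 r02 r1 r2 \<tau>1 \<tau>2) (Omega B1 B2) x0 x"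
    and soly: "is_solution (traffic_field B1 C1 F1 B2 C2 F2 \<phi> \<alpha> r01 r02 r1 r2 \<tau>1 \<tau>2) (Omega B1 B2) y0 y"
  shows "\<forall>t\<ge>0. fst (x t) \<le> fst (y t) \<and> snd (x t) \<le> snd (y t)"
proof -
  txt \<open>Only positivity, (A4) and the Lipschitz bounds are needed.\<close>
  obtain L1 L2 where
    "lipschitz_on L1 (Omega B1 B2) (\<lambda>z. r1 (\<tau>1 (fst z)) (\<tau>2 (snd z)))"
    "lipschitz_on L2 (Omega B1 B2) (\<lambda>z. r2 (\<tau>1 (fst z)) (\<tau>2 (snd z)))"
    using r_lip by blast
  then have lip: "lipschitz_on (max L1 L2) (Omega B1 B2) (\<lambda>z. r1 (\<tau>1 (fst z)) (\<tau>2 (snd z)))"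
                 "lipschitz_on (max L1 L2) (Omega B1 B2) (\<lambda>z. r2 (\<tau>1 (fst z)) (\<tau>2 (snd z)))"
    by (auto intro: lipschitz_on_le)
  have \<tau>1: "continuous_on {0..B1} \<tau>1" "mono_on {0..B1} \<tau>1"
    using tau_C1(1) tau_mono(1)
    by (simp_all add: C1_differentiable_imp_continuous_on strict_mono_on_imp_mono_on)
  have \<tau>2: "continuous_on {0..B2} \<tau>2" "mono_on {0..B2} \<tau>2"
    using tau_C1(2) tau_mono(2)
    by (simp_all add: C1_differentiable_imp_continuous_on strict_mono_on_imp_mono_on)
  have nonneg: "0 \<le> F1" "0 \<le> F2" "0 \<le> \<phi>" "0 \<le> \<alpha>"
    using pos alpha by simp_all
  have "0 \<le> \<phi> * \<alpha> * max L1 L2"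
    using nonneg lipschitz_on_nonneg[OF lip(1)] by simp
  with is_solution_ordered[OF solx soly init(3,4)]
    traffic_field_fst_quasimonotone[where ?r1.0 = r1 and ?\<tau>1.0 = \<tau>1,
      OF pos(2) CB(1) nonneg(1,3,4) \<tau>2 lip(1) A4(1)]
    traffic_field_snd_quasimonotone[where ?r2.0 = r2 and ?\<tau>2.0 = \<tau>2,
      OF pos(5) CB(2) nonneg(2,3,4) \<tau>1 lip(2) A4(2)]
  show ?thesis by blast
qed

end
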